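(* Let $\tilde\gamma$ be a closed edge path in the Artin complex $D(B_3)$ with 10 edges whose vertices alternate between type $\hat s_3$ and type $\hat s_2$. If $\tilde\gamma$ is contained in a Falk subcomplex of type $s_3$, then $\tilde\gamma$ is not embedded.
   Context: $A(B_3)=\langle s_1,s_2,s_3 \mid s_1s_2s_1=s_2s_1s_2,\ s_1s_3=s_3s_1,\ s_2s_3s_2s_3=s_3s_2s_3s_2\rangle$ and $W(B_3)$ is its quotient by $s_i^2=1$. For $i=1,2,3$, $\hat s_i$ denotes the standard parabolic subgroup generated by the other two generators. The Artin complex $D(B_3)$ (resp. Coxeter complex $C(B_3)$) has vertices the cosets $g\hat s_i$ in $A(B_3)$ (resp. $W(B_3)$), of type $\hat s_i$, and a set of vertices spans a simplex iff the cosets have nonempty common intersection. Let $\rho:D(B_3)\to C(B_3)$ be induced by $A(B_3)\to W(B_3)$. A Falk subcomplex of type $s_3$: take a reflection $r\in W(B_3)$ conjugate to $s_3$, let $H$ be the subcomplex of $C(B_3)$ fixed pointwise by $r$, choose a component of $C(B_3)\setminus H$, let $U$ be the largest closed subcomplex of $C(B_3)$ contained in it, and take a lift of $U$ along $\rho$ (a subcomplex of $D(B_3)$ mapped isomorphically onto $U$ by $\rho$). *)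

theory Defs
  imports Main
begin

text \<open>Words in the generators s1, s2, s3 and their inverses: a letter (i, True) is s_i,
  (i, False) is s_i inverse.  Group elements of A(B3) (resp. W(B3)) are equivalence classes
  of well-formed words modulo the congruence generated by free cancellation and the
  defining relations (plus s_i s_i = 1 in the Coxeter case, flag cox = True).\<close>

type_synonym word = "(nat \<times> bool) list"

definition wfw :: "word \<Rightarrow> bool" where
  "wfw w \<longleftrightarrow> set (map fst w) \<subseteq> {1,2,3}"

definition inv_word :: "word \<Rightarrow> word" where
  "inv_word w = rev (map (\<lambda>(i,b). (i, \<not> b)) w)"

inductive relator :: "bool \<Rightarrow> word \<Rightarrow> word \<Rightarrow> bool" for cox where
  braid12: "relator cox [(1,True),(2,True),(1,True)] [(2,True),(1,True),(2,True)]"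
| comm13: "relator cox [(1,True),(3,True)] [(3,True),(1,True)]"
| braid23: "relator cox [(2,True),(3,True),(2,True),(3,True)] [(3,True),(2,True),(3,True),(2,True)]"
| invol: "cox \<Longrightarrow> i \<in> {1,2,3} \<Longrightarrow> relator cox [(i,True),(i,True)] []"

inductive weq :: "bool \<Rightarrow> word \<Rightarrow> word \<Rightarrow> bool" for cox where
  refl: "weq cox w w"
| sym: "weq cox u v \<Longrightarrow> weq cox v u"
| trans: "weq cox u v \<Longrightarrow> weq cox v w \<Longrightarrow> weq cox u w"
| cancel: "weq cox (u @ [(i,b),(i,\<not> b)] @ v) (u @ v)"
| rel: "relator cox l r \<Longrightarrow> weq cox (u @ l @ v) (u @ r @ v)"

text \<open>The coset  g \<hat>s_i  (as a set of well-formed words), where \<hat>s_i is the standard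
  parabolic subgroup generated by the generators other than s_i.\<close>
definition coset :: "bool \<Rightarrow> nat \<Rightarrow> word \<Rightarrow> word set" where
  "coset cox i g = {v. wfw v \<and> (\<exists>u. set (map fst u) \<subseteq> {1,2,3} - {i} \<and> weq cox v (g @ u))}"

type_synonym vertex = "nat \<times> word set"

text \<open>Vertices of the Artin complex D(B3) (cox = False) / Coxeter complex C(B3) (cox = True):
  pairs (i, g\<hat>s_i); i is the type.\<close>
definition verts :: "bool \<Rightarrow> vertex set" where
  "verts cox = {(i, coset cox i g) | i g. i \<in> {1,2,3} \<and> wfw g}"

definition simplices :: "bool \<Rightarrow> vertex set set" where
  "simplices cox = {\<sigma>. finite \<sigma> \<and> \<sigma> \<noteq> {} \<and> \<sigma> \<subseteq> verts cox \<and> \<Inter> (snd ` \<sigma>) \<noteq> {}}"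

text \<open>The map rho : D(B3) \<rightarrow> C(B3) induced by A(B3) \<rightarrow> W(B3).\<close>
definition rho :: "vertex \<Rightarrow> vertex" where
  "rho v = (fst v, \<Union>w\<in>snd v. coset True (fst v) w)"

definition actW :: "word \<Rightarrow> vertex \<Rightarrow> vertex" where
  "actW r v = (fst v, \<Union>w\<in>snd v. coset True (fst v) (r @ w))"

definition reflection_s3 :: "word \<Rightarrow> bool" where
  "reflection_s3 r \<longleftrightarrow> (\<exists>g. wfw g \<and> r = g @ [(3,True)] @ inv_word g)"

definition nonfixed :: "word \<Rightarrow> vertex set" where
  "nonfixed r = {v \<in> verts True. actW r v \<noteq> v}"

definition cadj :: "word \<Rightarrow> (vertex \<times> vertex) set" where
  "cadj r = {(v,w). v \<in> nonfixed r \<and> w \<in> nonfixed r \<and> v \<noteq> w \<and> {v,w} \<in> simplices True}"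

text \<open>U: the largest closed subcomplex of C(B3) contained in the component of C(B3) - H
  containing the non-fixed vertex v0, i.e. the full subcomplex on the vertices of that
  component.\<close>
definition falk_U :: "word \<Rightarrow> vertex \<Rightarrow> vertex set set" where
  "falk_U r v0 = {\<sigma> \<in> simplices True. \<sigma> \<subseteq> (cadj r)\<^sup>* `` {v0}}"

text \<open>L (a set of simplices of D(B3)) is a Falk subcomplex of type s3: a subcomplex of D(B3)
  mapped isomorphically onto some U by rho.\<close>
definition falk_subcomplex_s3 :: "vertex set set \<Rightarrow> bool" where
  "falk_subcomplex_s3 L \<longleftrightarrow>
     (\<exists>r v0. reflection_s3 r \<and> v0 \<in> nonfixed r \<and>
        L \<subseteq> simplices False \<and>
        (\<forall>\<sigma>\<in>L. \<forall>\<tau>. \<tau> \<subseteq> \<sigma> \<and> \<tau> \<noteq> {} \<longrightarrow> \<tau> \<in> L) \<and>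
        inj_on rho (\<Union> L) \<and>
        (\<lambda>\<sigma>. rho ` \<sigma>) ` L = falk_U r v0)"

end

(* Counting the letters s3 modulo 2 is invariant under all defining relations, so it is a
   homomorphism from A(B3), and from W(B3), onto Z/2.  Choose for every edge of the path a
   group element z_i in the intersection of its two cosets.  At a vertex of type \<hat>s3, a
   coset of <s1,s2>, consecutive z_i have the same parity.  At a vertex of type \<hat>s2, a coset
   of <s1,s3>, they must have different parities: otherwise their quotient is an element of
   <s1,s3> with an even number of letters s3; in W(B3), where s1 and s3 are commuting
   involutions, such an element lies in <s1>, so rho identifies the two neighbouring vertices
   of type \<hat>s3.  This is impossible, since rho is injective on a Falk subcomplex and the path
   is embedded.  So the parity changes exactly five times along a closed path, which is
   absurd. *)

theory Submission
  imports Defs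
begin

lemmas [trans] = weq.trans

lemma weq_append_cong: "weq c u v \<Longrightarrow> weq c (a @ u @ b) (a @ v @ b)"
proof (induction arbitrary: a b rule: weq.induct)
  case (refl w)
  show ?case by (rule weq.refl)
next
  case (sym u v)
  then show ?case by (blast intro: weq.sym)
next
  case (trans u v w)
  then show ?case by (blast intro: weq.trans)
next
  case (cancel u i bb v)
  show ?case using weq.cancel[of c "a @ u" i bb "v @ b"] by simp
next
  case (rel l r u v)
  show ?case using weq.rel[OF rel.hyps, of "a @ u" "v @ b"] by simp
qed

lemma weq_append_left: "weq c u v \<Longrightarrow> weq c (a @ u) (a @ v)"
  using weq_append_cong[of c u v a "[]"] by simp

lemma weq_append_right: "weq c u v \<Longrightarrow> weq c (u @ b) (v @ b)"
  using weq_append_cong[of c u v "[]" b] by simp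

lemma weq_imp_weq_coxeter: "weq c u v \<Longrightarrow> weq True u v"
proof (induction rule: weq.induct)
  case (refl w)
  show ?case by (rule weq.refl)
next
  case (sym u v)
  show ?case using sym.IH by (rule weq.sym)
next
  case (trans u v w)
  show ?case using trans.IH by (rule weq.trans)
next
  case (cancel u i b v)
  show ?case by (rule weq.cancel)
next
  case (rel l r u v)
  from rel.hyps have "relator True l r"
    by (induction rule: relator.induct) (rule relator.intros; simp)+
  then show ?case by (rule weq.rel)
qed

lemma inv_word_Cons: "inv_word ((i, b) # u) = inv_word u @ [(i, \<not> b)]"
  by (simp add: inv_word_def)

lemma fst_set_inv_word [simp]: "fst ` set (inv_word u) = fst ` set u"
  by (induction u) (auto simp: inv_word_def)

lemma weq_append_inv_word: "weq c (u @ inv_word u) []"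
proof (induction u)
  case Nil
  show ?case by (simp add: inv_word_def weq.refl)
next
  case (Cons a u)
  obtain i b where a: "a = (i, b)" by fastforce
  have "weq c (a # u @ inv_word u @ [(i, \<not> b)]) [(i, b), (i, \<not> b)]"
    using weq_append_cong[OF Cons.IH, of "[a]" "[(i, \<not> b)]"] by (simp add: a)
  also have "weq c [(i, b), (i, \<not> b)] []"
    using weq.cancel[of c "[]" i b "[]"] by simp
  finally show ?case by (simp add: a inv_word_Cons)
qed

definition s3_count :: "word \<Rightarrow> nat" where
  "s3_count w = length (filter (\<lambda>l. fst l = 3) w)"

lemma s3_count_simps [simp]:
  "s3_count [] = 0"
  "s3_count (a # w) = (if fst a = 3 then Suc (s3_count w) else s3_count w)"
  "s3_count (u @ w) = s3_count u + s3_count w"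
  by (simp_all add: s3_count_def)

lemma s3_count_eq_0: "3 \<notin> set (map fst u) \<Longrightarrow> s3_count u = 0"
  by (induction u) auto

lemma weq_even_s3_count: "weq c u v \<Longrightarrow> even (s3_count u) = even (s3_count v)"
proof (induction rule: weq.induct)
  case (rel l r u v)
  from rel.hyps have "even (s3_count l) = even (s3_count r)"
    by (induction rule: relator.induct) auto
  then show ?case by simp
qed auto

lemma weq_coxeter_letter: "i \<in> {1,2,3} \<Longrightarrow> weq True [(i, b)] [(i, True)]"
proof (cases b)
  case False
  assume i: "i \<in> {1,2,3}"
  have "weq True [(i, False)] [(i, False), (i, True), (i, True)]"
    using weq.sym[OF weq.rel[OF relator.invol[OF TrueI i], of "[(i, False)]" "[]"]] by simp
  also have "weq True \<dots> [(i, True)]"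
    using weq.cancel[of True "[]" i False "[(i, True)]"] by simp
  finally show ?thesis using False by simp
qed (simp add: weq.refl)

lemma weq_coxeter_s3_commute:
  "set (map fst f) \<subseteq> {1} \<Longrightarrow> weq True ((3, True) # f) (f @ [(3, True)])"
proof (induction f)
  case Nil
  show ?case by (simp add: weq.refl)
next
  case (Cons a f)
  obtain b where a: "a = (1, b)" using Cons.prems by (cases a) auto
  have s1: "weq True [(1, b)] [(1, True)]" by (rule weq_coxeter_letter) simp
  have "weq True ((3, True) # (1, b) # f) ((3, True) # (1, True) # f)"
    using weq_append_cong[OF s1, of "[(3, True)]" f] by simp
  also have "weq True \<dots> ((1, True) # (3, True) # f)"
    using weq.sym[OF weq.rel[OF relator.comm13, of True "[]" f]] by simp
  also have "weq True \<dots> ((1, True) # f @ [(3, True)])"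
    using weq_append_left[OF Cons.IH, of "[(1, True)]"] Cons.prems by simp
  also have "weq True \<dots> ((1, b) # f @ [(3, True)])"
    using weq_append_right[OF weq.sym[OF s1], of "f @ [(3, True)]"] by simp
  finally show ?case by (simp add: a)
qed

lemma weq_coxeter_s1_s3_normal_form:
  assumes "set (map fst u) \<subseteq> {1,3}"
  shows "\<exists>f. set (map fst f) \<subseteq> {1} \<and>
           weq True u (f @ (if even (s3_count u) then [] else [(3, True)]))"
  using assms
proof (induction u)
  case Nil
  show ?case by (intro exI[of _ "[]"]) (simp add: weq.refl)
next
  case (Cons a u)
  define t where "t = (if even (s3_count u) then [] else [(3 :: nat, True)])"
  obtain f where f: "set (map fst f) \<subseteq> {1}" "weq True u (f @ t)"
    using Cons by (auto simp: t_def)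
  obtain i b where a: "a = (i, b)" by fastforce
  have "i = 1 \<or> i = 3" using Cons.prems a by auto
  then show ?case
  proof
    assume "i = 1"
    then show ?thesis
      using f weq_append_left[OF f(2), of "[a]"] a by (intro exI[of _ "a # f"]) (simp add: t_def)
  next
    assume i: "i = 3"
    have "weq True (a # u) ((3, True) # u)"
      using weq_append_right[OF weq_coxeter_letter, of 3 b u] by (simp add: a i)
    also have "weq True \<dots> ((3, True) # f @ t)"
      using weq_append_left[OF f(2), of "[(3, True)]"] by simp
    also have "weq True \<dots> (f @ [(3, True)] @ t)"
      using weq_append_right[OF weq_coxeter_s3_commute[OF f(1)], of t] by simp
    finally have "weq True (a # u) (f @ [(3, True)] @ t)" .
    moreover have "weq True (f @ [(3, True), (3, True)] @ []) (f @ [] @ [])"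
      by (rule weq.rel, rule relator.invol) auto
    ultimately show ?thesis using f(1) a i
      by (intro exI[of _ f]) (auto simp: t_def intro: weq.trans)
  qed
qed

lemma coset_weq: "weq c g g' \<Longrightarrow> coset c i g = coset c i g'"
  unfolding coset_def by (auto; meson weq.trans weq.sym weq_append_right)

lemma coset_append_parabolic:
  assumes u: "set (map fst u) \<subseteq> {1,2,3} - {i}"
  shows "coset c i (g @ u) = coset c i g"
proof
  show "coset c i (g @ u) \<subseteq> coset c i g"
  proof
    fix v assume "v \<in> coset c i (g @ u)"
    then obtain u' where "wfw v" "set (map fst u') \<subseteq> {1,2,3} - {i}" "weq c v (g @ u @ u')"
      unfolding coset_def by auto
    then show "v \<in> coset c i g"
      unfolding coset_def using u by (intro CollectI conjI exI[of _ "u @ u'"]) auto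
  qed
next
  show "coset c i g \<subseteq> coset c i (g @ u)"
  proof
    fix v assume "v \<in> coset c i g"
    then obtain u' where v: "wfw v" "set (map fst u') \<subseteq> {1,2,3} - {i}" "weq c v (g @ u')"
      unfolding coset_def by auto
    note v(3)
    also have "weq c (g @ u') (g @ u @ inv_word u @ u')"
      using weq_append_cong[OF weq.sym[OF weq_append_inv_word[of c u]], of g u'] by simp
    finally have "weq c v ((g @ u) @ (inv_word u @ u'))" by simp
    then show "v \<in> coset c i (g @ u)"
      unfolding coset_def using u v(1,2) by (intro CollectI conjI exI[of _ "inv_word u @ u'"]) auto
  qed
qed

lemma coset_parabolic_quotient:
  assumes "x \<in> coset c i h" "y \<in> coset c i h"
  obtains u where "set (map fst u) \<subseteq> {1,2,3} - {i}" "weq c y (x @ u)"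
proof -
  obtain u1 where u1: "set (map fst u1) \<subseteq> {1,2,3} - {i}" "weq c x (h @ u1)"
    using assms(1) unfolding coset_def by auto
  obtain u2 where u2: "set (map fst u2) \<subseteq> {1,2,3} - {i}" "weq c y (h @ u2)"
    using assms(2) unfolding coset_def by auto
  note u2(2)
  also have "weq c (h @ u2) (h @ u1 @ inv_word u1 @ u2)"
    using weq_append_cong[OF weq.sym[OF weq_append_inv_word[of c u1]], of h u2] by simp
  also have "weq c \<dots> (x @ inv_word u1 @ u2)"
    using weq_append_right[OF weq.sym[OF u1(2)], of "inv_word u1 @ u2"] by simp
  finally show ?thesis using u1(1) u2(1) by (intro that[of "inv_word u1 @ u2"]) auto
qed

lemma coset_coxeter_eq_if_mem:
  assumes "x \<in> coset c i g"
  shows "coset True i x = coset True i g"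
proof -
  obtain u where u: "set (map fst u) \<subseteq> {1,2,3} - {i}" "weq c x (g @ u)"
    using assms unfolding coset_def by auto
  have "coset True i x = coset True i (g @ u)"
    using u(2) by (intro coset_weq weq_imp_weq_coxeter)
  also have "\<dots> = coset True i g"
    using u(1) by (rule coset_append_parabolic)
  finally show ?thesis .
qed

lemma rho_eq_coset_coxeter:
  assumes "v \<in> verts c" "x \<in> snd v"
  shows "rho v = (fst v, coset True (fst v) x)"
proof -
  obtain i g where v: "v = (i, coset c i g)" using assms(1) unfolding verts_def by auto
  then have "coset True i w = coset True i g" if "w \<in> snd v" for w
    using that coset_coxeter_eq_if_mem by auto
  then show ?thesis unfolding rho_def using assms(2) v by auto
qed

lemma even_s3_count_coset3:
  assumes "x \<in> coset c 3 g"
  shows "even (s3_count x) = even (s3_count g)"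
proof -
  obtain u where u: "set (map fst u) \<subseteq> {1,2,3} - {3}" "weq c x (g @ u)"
    using assms unfolding coset_def by auto
  have "s3_count u = 0"
    using u(1) by (intro s3_count_eq_0) auto
  then show ?thesis using weq_even_s3_count[OF u(2)] by simp
qed

lemma coset_coxeter3_eq_if_same_parity:
  assumes "x \<in> coset c 2 h" "y \<in> coset c 2 h"
    and parity: "even (s3_count x) = even (s3_count y)"
  shows "coset True 3 y = coset True 3 x"
proof -
  obtain u where u: "set (map fst u) \<subseteq> {1,2,3} - {2}" "weq c y (x @ u)"
    using coset_parabolic_quotient[OF assms(1,2)] .
  have u13: "set (map fst u) \<subseteq> {1,3}" using u(1) by auto
  have "even (s3_count u)" using weq_even_s3_count[OF u(2)] parity by auto
  then obtain f where f: "set (map fst f) \<subseteq> {1}" "weq True u f"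
    using weq_coxeter_s1_s3_normal_form[OF u13] by auto
  have "coset True 3 y = coset True 3 (x @ u)"
    using u(2) by (intro coset_weq weq_imp_weq_coxeter)
  also have "\<dots> = coset True 3 (x @ f)"
    using f(2) by (intro coset_weq weq_append_left)
  also have "\<dots> = coset True 3 x"
    using f(1) by (intro coset_append_parabolic) auto
  finally show ?thesis .
qed

lemma even_s3_count_vertex3:
  assumes "v \<in> verts c" "fst v = 3" "x \<in> snd v" "y \<in> snd v"
  shows "even (s3_count x) = even (s3_count y)"
proof -
  obtain g where "snd v = coset c 3 g" using assms(1,2) unfolding verts_def by auto
  then show ?thesis using even_s3_count_coset3 assms(3,4) by metis
qed

lemma rho_eq_across_vertex2_if_same_parity:
  assumes "v \<in> verts c" "fst v = 2" "a \<in> verts c" "b \<in> verts c" "fst a = 3" "fst b = 3"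
    and "x \<in> snd a" "x \<in> snd v" "y \<in> snd v" "y \<in> snd b"
    and "even (s3_count x) = even (s3_count y)"
  shows "rho a = rho b"
proof -
  obtain h where "snd v = coset c 2 h" using assms(1,2) unfolding verts_def by auto
  then have "coset True 3 y = coset True 3 x"
    using coset_coxeter3_eq_if_same_parity assms(8,9,11) by metis
  then show ?thesis
    using rho_eq_coset_coxeter[OF assms(3,7)] rho_eq_coset_coxeter[OF assms(4,10)] assms(5,6)
    by simp
qed

lemma simplices_edgeD:
  assumes "{v, w} \<in> simplices c"
  shows "v \<in> verts c" "w \<in> verts c" "\<exists>x. x \<in> snd v \<and> x \<in> snd w"
  using assms unfolding simplices_def by auto

lemma edge_path_verts:
  assumes "\<And>i. i < m \<Longrightarrow> {\<gamma> i, \<gamma> (Suc i)} \<in> simplices c" "i \<le> m" "0 < m"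
  shows "\<gamma> i \<in> verts c"
proof (cases "i < m")
  case True
  then show ?thesis using simplices_edgeD(1)[OF assms(1)] by blast
next
  case False
  then have "i = Suc (m - 1)" using assms(2,3) by simp
  then show ?thesis using simplices_edgeD(2)[OF assms(1), of "m - 1"] assms(3) by simp
qed

lemma even_if_flips_around_cycle:
  fixes p :: "nat \<Rightarrow> bool"
  assumes flip: "\<And>k. k < n \<Longrightarrow> p (2*k) \<noteq> p (2*k + 1)"
    and stay: "\<And>k. Suc k < n \<Longrightarrow> p (2*k + 1) = p (2*k + 2)"
    and close: "p (2*n - 1) = p 0"
  shows "even n"
proof (rule ccontr)
  assume "odd n"
  then obtain m where n: "n = Suc m" and "even m" by (cases n) auto
  have p_even: "p (2*k) = (even k = p 0)" if "k < n" for k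
    using that
  proof (induction k)
    case 0
    show ?case by simp
  next
    case (Suc k)
    then have "p (2 * Suc k) = p (2*k + 1)" using stay[of k] by simp
    also have "\<dots> = (\<not> p (2*k))" using flip[of k] Suc.prems by auto
    finally show ?case using Suc by auto
  qed
  have "p (2*m) = p 0" using p_even[of m] n \<open>even m\<close> by simp
  moreover have "p (2*m) \<noteq> p (2*m + 1)" using flip[of m] n by simp
  moreover have "2*m + 1 = 2*n - 1" using n by simp
  ultimately show False using close by simp
qed

lemma alternating_cycle_not_embedded:
  fixes \<gamma> :: "nat \<Rightarrow> vertex"
  assumes "odd n" "1 < n"
    and closed: "\<gamma> (2*n) = \<gamma> 0"
    and edges: "\<And>i. i < 2*n \<Longrightarrow> {\<gamma> i, \<gamma> (Suc i)} \<in> simplices False"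
    and types: "\<And>i. i \<le> 2*n \<Longrightarrow> fst (\<gamma> i) = (if even i then 3 else 2)"
    and rho_inj: "inj_on rho (\<gamma> ` {..2*n})"
  shows "\<not> inj_on \<gamma> {0..<2*n}"
proof
  assume inj: "inj_on \<gamma> {0..<2*n}"
  have verts: "\<gamma> i \<in> verts False" if "i \<le> 2*n" for i
    using edge_path_verts[of "2*n" \<gamma>, OF edges that] \<open>1 < n\<close> by simp
  obtain z where z: "\<And>i. i < 2*n \<Longrightarrow> z i \<in> snd (\<gamma> i) \<and> z i \<in> snd (\<gamma> (Suc i))"
    using simplices_edgeD(3)[OF edges] by metis
  define p where "p i = even (s3_count (z i))" for i
  have stay: "p (2*k + 1) = p (2*k + 2)" if "Suc k < n" for k
    unfolding p_def
    using even_s3_count_vertex3[OF verts[of "2*k + 2"]] types[of "2*k + 2"]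
      z[of "2*k + 1"] z[of "2*k + 2"] that by simp
  have close: "p (2*n - 1) = p 0"
    unfolding p_def
    using even_s3_count_vertex3[OF verts[of "2*n"]] types[of "2*n"]
      z[of "2*n - 1"] z[of 0] closed \<open>1 < n\<close> by simp
  have flip: "p (2*k) \<noteq> p (2*k + 1)" if "k < n" for k
  proof
    assume "p (2*k) = p (2*k + 1)"
    then have "rho (\<gamma> (2*k)) = rho (\<gamma> (2*k + 2))"
      using rho_eq_across_vertex2_if_same_parity[OF verts[of "2*k + 1"] _
          verts[of "2*k"] verts[of "2*k + 2"] _ _ _ _ _ _,
          of "z (2*k)" "z (2*k + 1)"]
        types[of "2*k"] types[of "2*k + 1"] types[of "2*k + 2"]
        z[of "2*k"] z[of "2*k + 1"] that
      unfolding p_def by simp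
    then have same: "\<gamma> (2*k) = \<gamma> (2*k + 2)"
      using rho_inj that unfolding inj_on_def by simp
    show False
    proof (cases "Suc k < n")
      case True
      then show False using inj_onD[OF inj same] by simp
    next
      case False
      then have "2*k + 2 = 2*n" "0 < k" using that \<open>1 < n\<close> by simp_all
      then show False using inj_onD[OF inj, of "2*k" 0] same closed that by simp
    qed
  qed
  have "even n" using even_if_flips_around_cycle[of n p] flip stay close by blast
  then show False using \<open>odd n\<close> by simp
qed

theorem mainTheorem14:
  fixes \<gamma> :: "nat \<Rightarrow> vertex" and L :: "vertex set set"
  assumes closed: "\<gamma> 10 = \<gamma> 0"
    and edges: "\<forall>i<10. \<gamma> i \<noteq> \<gamma> (Suc i) \<and> {\<gamma> i, \<gamma> (Suc i)} \<in> simplices False"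
    and types: "\<forall>i\<le>10. fst (\<gamma> i) = (if even i then 3 else 2)"
    and falk: "falk_subcomplex_s3 L"
    and contained: "\<forall>i<10. {\<gamma> i, \<gamma> (Suc i)} \<in> L"
  shows "\<not> inj_on \<gamma> {0..<10}"
proof -
  have rho_inj: "inj_on rho (\<Union> L)" using falk unfolding falk_subcomplex_s3_def by blast
  have in_L: "\<gamma> i \<in> \<Union> L" if "i < 10" for i
    using contained that by blast
  have "\<gamma> ` {..10} \<subseteq> \<Union> L"
  proof (rule image_subsetI)
    fix i :: nat assume "i \<in> {..10}"
    then consider "i < 10" | "i = 10" by fastforce
    then show "\<gamma> i \<in> \<Union> L" using in_L[of i] in_L[of 0] closed by cases simp_all
  qed
  then have "inj_on rho (\<gamma> ` {..2*5})" using inj_on_subset[OF rho_inj] by simp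
  then show ?thesis
    using alternating_cycle_not_embedded[of 5 \<gamma>] closed edges types by simp
qed

end
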